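(* Let $n \ge 2$, let $K, L$ be compact convex subsets of $\mathbb{R}^n$, and let $d \in \{1, \dots, n-1\}$. Suppose that for every $(n-d)$-dimensional linear subspace $\xi \subseteq \mathbb{R}^n$, the projection $L_\xi$ contains a translate of $K_\xi$. Then $$V_n(K) \le \left(\tfrac{n}{n-d}\right)^n V_n(L).$$
   Context: For a set $S\subseteq\mathbb{R}^n$ and a linear subspace $\xi$, $S_\xi$ denotes the orthogonal projection of $S$ onto $\xi$. "$A$ contains a translate of $B$" means $B + w \subseteq A$ for some vector $w$. $V_n$ is $n$-dimensional volume. *)

theory Defs
  imports "HOL-Analysis.Analysis"
begin

definition orth_proj :: "'a::euclidean_space set \<Rightarrow> 'a \<Rightarrow> 'a" where
  "orth_proj \<xi> x = (THE y. y \<in> \<xi> \<and> (\<forall>v\<in>\<xi>. orthogonal (x - y) v))"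

definition proj_set :: "'a::euclidean_space set \<Rightarrow> 'a set \<Rightarrow> 'a set" where
  "proj_set \<xi> S = orth_proj \<xi> ` S"

definition contains_translate :: "'a::real_vector set \<Rightarrow> 'a set \<Rightarrow> bool" where
  "contains_translate A B \<longleftrightarrow> (\<exists>w. (\<lambda>x. x + w) ` B \<subseteq> A)"

end

theory Submission
  imports Defs
begin

text \<open>
  Let n = DIM('a), k = n - d and c = n / k.  For x in K write D x for the reflected homothetic
  copy x - c L of L.  The theorem follows once all the sets D x (x in K) are shown to have a
  common point w: then K is contained in w + c L, whose volume is c^n times that of L.

  By Helly's theorem and compactness it suffices that any n + 1 copies D x_0, ..., D x_n meet.
  For these, minimise the sum of squared distances to the copies; the minimiser w has nearest
  points p_i in D x_i whose displacements v_i = p_i - w sum to zero, and p_i = x_i - c l_i where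
  l_i maximises the functional (-, v_i) on L.  For each k-element index set I the projection
  hypothesis, applied to a k-dimensional subspace containing the v_i with i in I, yields a
  linear inequality; averaging it over all k-subsets gives sum (x_i, v_i) <= c * sum (l_i, v_i),
  i.e. sum |v_i|^2 <= 0.  Hence w = p_i lies in every copy.
\<close>

text \<open>The projection onto a subspace does not change inner products with vectors of the
  subspace; this is all that is used of the definition of orth_proj.\<close>
lemma inner_orth_proj:
  fixes \<xi> :: "'a::euclidean_space set"
  assumes "subspace \<xi>" "v \<in> \<xi>"
  shows "inner (orth_proj \<xi> x) v = inner x v"
proof -
  obtain y z where y: "y \<in> span \<xi>" and z: "\<And>w. w \<in> span \<xi> \<Longrightarrow> orthogonal z w"
    and xyz: "x = y + z"
    using orthogonal_subspace_decomp_exists[of \<xi> x] by blast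
  have span: "span \<xi> = \<xi>" using assms(1) by (simp add: span_eq_iff)
  have y_ok: "y \<in> \<xi> \<and> (\<forall>v\<in>\<xi>. orthogonal (x - y) v)" using y z xyz span by auto
  have "orth_proj \<xi> x = y"
    unfolding orth_proj_def
  proof (rule the_equality)
    show "y \<in> \<xi> \<and> (\<forall>v\<in>\<xi>. orthogonal (x - y) v)" by (fact y_ok)
    fix y' assume y': "y' \<in> \<xi> \<and> (\<forall>v\<in>\<xi>. orthogonal (x - y') v)"
    have "y - y' \<in> \<xi>" using y' y_ok assms(1) by (simp add: subspace_diff)
    then have "orthogonal (x - y') (y - y')" "orthogonal (x - y) (y - y')" using y' y_ok by auto
    then have "inner (y - y') (y - y') = 0"
      unfolding orthogonal_def by (simp add: inner_diff_left inner_diff_right)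
    then show "y' = y" by simp
  qed
  then have "orthogonal (x - orth_proj \<xi> x) v" using y_ok assms(2) by simp
  then show ?thesis unfolding orthogonal_def by (simp add: inner_diff_left)
qed

lemma contains_translate_proj_lift:
  fixes K L \<xi> :: "'a::euclidean_space set"
  assumes "subspace \<xi>" "contains_translate (proj_set \<xi> L) (proj_set \<xi> K)"
  obtains t where "\<And>z. z \<in> K \<Longrightarrow> \<exists>l\<in>L. \<forall>u\<in>\<xi>. inner l u = inner (z + t) u"
proof -
  obtain t where t: "(\<lambda>z. z + t) ` proj_set \<xi> K \<subseteq> proj_set \<xi> L"
    using assms(2) unfolding contains_translate_def by blast
  have "\<exists>l\<in>L. \<forall>u\<in>\<xi>. inner l u = inner (z + t) u" if "z \<in> K" for z
  proof -
    have "orth_proj \<xi> z + t \<in> proj_set \<xi> L" using t that unfolding proj_set_def by blast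
    then obtain l where l: "l \<in> L" "orth_proj \<xi> l = orth_proj \<xi> z + t"
      unfolding proj_set_def by auto
    have "inner l u = inner (z + t) u" if "u \<in> \<xi>" for u
      using inner_orth_proj[OF assms(1) that, of l] inner_orth_proj[OF assms(1) that, of z] l(2)
      by (simp add: inner_add_left)
    then show ?thesis using l(1) by blast
  qed
  then show ?thesis using that by blast
qed

lemma subspace_of_dim_containing:
  fixes V :: "'a::euclidean_space set"
  assumes "dim V \<le> k" "k \<le> DIM('a)"
  obtains \<xi> where "subspace \<xi>" "dim \<xi> = k" "V \<subseteq> \<xi>"
proof -
  obtain B0 where B0: "B0 \<subseteq> V" "independent B0" "V \<subseteq> span B0" "card B0 = dim V"
    using basis_exists by blast
  obtain B where B: "B0 \<subseteq> B" "B \<subseteq> UNIV" "independent B" "UNIV \<subseteq> span B"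
    using maximal_independent_subset_extend[of B0 UNIV] B0 by blast
  have fB: "finite B" using B independent_bound by blast
  have cB: "card B = DIM('a)" using basis_card_eq_dim[of B UNIV] B by simp
  have fB0: "finite B0" using fB B finite_subset by blast
  have "k - card B0 \<le> card (B - B0)" using cB B fB fB0 assms B0 by (simp add: card_Diff_subset)
  then obtain C where C: "C \<subseteq> B - B0" "card C = k - card B0" "finite C"
    using obtain_subset_with_card_n by blast
  have indep: "independent (B0 \<union> C)" by (rule independent_mono[OF B(3)]) (use B C in auto)
  have card: "card (B0 \<union> C) = k" using C fB0 B0 assms by (subst card_Un_disjoint) auto
  show ?thesis
  proof
    show "subspace (span (B0 \<union> C))" by simp
    show "dim (span (B0 \<union> C)) = k" using indep card dim_span_eq_card_independent by metis
    show "V \<subseteq> span (B0 \<union> C)" using B0(3) span_mono[of B0 "B0 \<union> C"] by blast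
  qed
qed

lemma projection_hypothesis_nonempty:
  fixes K L :: "'a::euclidean_space set"
  assumes "K \<noteq> {}" "k \<le> DIM('a)"
    and proj: "\<And>\<xi>. subspace \<xi> \<Longrightarrow> dim \<xi> = k \<Longrightarrow>
                 contains_translate (proj_set \<xi> L) (proj_set \<xi> K)"
  shows "L \<noteq> {}"
proof -
  obtain \<xi> :: "'a set" where "subspace \<xi>" "dim \<xi> = k"
    using subspace_of_dim_containing[of "{}" k] assms(2) by auto
  then obtain t where "(\<lambda>z. z + t) ` proj_set \<xi> K \<subseteq> proj_set \<xi> L"
    using proj unfolding contains_translate_def by blast
  then show ?thesis using assms(1) unfolding proj_set_def by blast
qed

lemma sum_family_by_incidence:
  fixes f :: "'b \<Rightarrow> real"
  assumes "finite \<I>" "finite B" "\<And>I. I \<in> \<I> \<Longrightarrow> S I \<subseteq> B"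
  shows "(\<Sum>I\<in>\<I>. \<Sum>b\<in>S I. f b) = (\<Sum>b\<in>B. f b * real (card {I\<in>\<I>. b \<in> S I}))"
proof -
  have "(\<Sum>b\<in>B. if b \<in> S I then f b else 0) = (\<Sum>b\<in>S I. f b)" if "I \<in> \<I>" for I
  proof -
    have "{b\<in>B. b \<in> S I} = S I" using assms(3)[OF that] by blast
    then show ?thesis using sum.inter_filter[OF assms(2), of f "\<lambda>b. b \<in> S I"] by simp
  qed
  then have "(\<Sum>I\<in>\<I>. \<Sum>b\<in>S I. f b) = (\<Sum>I\<in>\<I>. \<Sum>b\<in>B. if b \<in> S I then f b else 0)"
    by simp
  also have "\<dots> = (\<Sum>b\<in>B. \<Sum>I\<in>\<I>. if b \<in> S I then f b else 0)" by (rule sum.swap)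
  also have "\<dots> = (\<Sum>b\<in>B. f b * real (card {I\<in>\<I>. b \<in> S I}))"
    by (intro sum.cong refl)
       (simp add: sum.inter_filter[OF assms(1), symmetric] mult.commute)
  finally show ?thesis .
qed

lemma card_subsets_containing:
  assumes "finite A" "i \<in> A" "1 \<le> k"
  shows "card {I. I \<subseteq> A \<and> card I = k \<and> i \<in> I} = (card A - 1) choose (k - 1)"
proof -
  let ?J = "{J. J \<subseteq> A - {i} \<and> card J = k - 1}"
  have fin: "finite (A - {i})" using assms by simp
  have inj: "inj_on (insert i) ?J"
    unfolding inj_on_def by (metis (no_types, lifting) Diff_insert_absorb mem_Collect_eq subset_Diff_insert)
  have "insert i ` ?J = {I. I \<subseteq> A \<and> card I = k \<and> i \<in> I}"
  proof (intro equalityI subsetI)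
    fix I assume "I \<in> insert i ` ?J"
    then obtain J where J: "J \<subseteq> A - {i}" "card J = k - 1" "I = insert i J" by blast
    have "finite J" using J fin finite_subset by blast
    then have "card I = k" using J assms by (simp add: subset_Diff_insert)
    then show "I \<in> {I. I \<subseteq> A \<and> card I = k \<and> i \<in> I}" using J assms by auto
  next
    fix I assume I: "I \<in> {I. I \<subseteq> A \<and> card I = k \<and> i \<in> I}"
    then have "finite I" using assms finite_subset by blast
    then have "I - {i} \<in> ?J" using I by auto
    moreover have "I = insert i (I - {i})" using I by auto
    ultimately show "I \<in> insert i ` ?J" by blast
  qed
  then have "card {I. I \<subseteq> A \<and> card I = k \<and> i \<in> I} = card ?J"
    using card_image[OF inj] by simp
  also have "\<dots> = card (A - {i}) choose (k - 1)" using n_subsets[OF fin] by simp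
  finally show ?thesis using assms by simp
qed

text \<open>Each element of an (n+1)-set lies in C(n, k-1) of its k-subsets.\<close>
lemma sum_k_subsets_members:
  fixes a :: "'i \<Rightarrow> real"
  assumes A: "finite A" "card A = n + 1" and k: "1 \<le> k"
  shows "(\<Sum>I\<in>{I. I \<subseteq> A \<and> card I = k}. \<Sum>i\<in>I. a i) = real (n choose (k - 1)) * (\<Sum>i\<in>A. a i)"
proof -
  let ?\<I> = "{I. I \<subseteq> A \<and> card I = k}"
  have fin: "finite ?\<I>" using A(1) by (simp add: finite_Collect_subsets)
  have "card {I\<in>?\<I>. i \<in> I} = n choose (k - 1)" if "i \<in> A" for i
  proof -
    have "{I\<in>?\<I>. i \<in> I} = {I. I \<subseteq> A \<and> card I = k \<and> i \<in> I}" by blast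
    then show ?thesis using card_subsets_containing[OF A(1) that k] A(2) by simp
  qed
  then have "(\<Sum>I\<in>?\<I>. \<Sum>i\<in>I. a i) = (\<Sum>i\<in>A. a i * real (n choose (k - 1)))"
    using sum_family_by_incidence[OF fin A(1), of id a] by simp
  then show ?thesis by (simp add: sum_distrib_right mult.commute)
qed

text \<open>Each ordered pair (j, i) of distinct elements has j outside and i inside for exactly
  C(n-1, k-1) of the k-subsets.\<close>
lemma sum_k_subsets_cross:
  fixes b :: "'i \<Rightarrow> 'i \<Rightarrow> real"
  assumes A: "finite A" "card A = n + 1" and k: "1 \<le> k"
  shows "(\<Sum>I\<in>{I. I \<subseteq> A \<and> card I = k}. \<Sum>j\<in>A - I. \<Sum>i\<in>I. b j i)
       = real ((n - 1) choose (k - 1)) * (\<Sum>j\<in>A. \<Sum>i\<in>A - {j}. b j i)"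
proof -
  let ?\<I> = "{I. I \<subseteq> A \<and> card I = k}"
  let ?c = "real ((n - 1) choose (k - 1))"
  have fin: "finite ?\<I>" using A(1) by (simp add: finite_Collect_subsets)
  have incidence: "card {I\<in>?\<I>. (j, i) \<in> (A - I) \<times> I} = (if i = j then 0 else (n - 1) choose (k - 1))"
    if "j \<in> A" "i \<in> A" for i j
  proof (cases "i = j")
    case False
    have "{I\<in>?\<I>. (j, i) \<in> (A - I) \<times> I} = {I. I \<subseteq> A - {j} \<and> card I = k \<and> i \<in> I}"
      using that by blast
    moreover have "card (A - {j}) = n" using A that by simp
    ultimately show ?thesis using card_subsets_containing[of "A - {j}" i k] A that k False by simp
  qed simp
  have "(\<Sum>I\<in>?\<I>. \<Sum>j\<in>A - I. \<Sum>i\<in>I. b j i)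
      = (\<Sum>I\<in>?\<I>. \<Sum>x\<in>(A - I) \<times> I. b (fst x) (snd x))"
    by (simp add: sum.cartesian_product case_prod_beta)
  also have "\<dots> = (\<Sum>x\<in>A \<times> A. b (fst x) (snd x) * real (card {I\<in>?\<I>. x \<in> (A - I) \<times> I}))"
    by (rule sum_family_by_incidence[OF fin finite_cartesian_product[OF A(1) A(1)]]) blast
  also have "\<dots> = (\<Sum>j\<in>A. \<Sum>i\<in>A. b j i * real (card {I\<in>?\<I>. (j, i) \<in> (A - I) \<times> I}))"
    by (simp only: sum.cartesian_product split_def prod.collapse)
  also have "\<dots> = (\<Sum>j\<in>A. \<Sum>i\<in>A. if i = j then 0 else ?c * b j i)"
  proof (intro sum.cong refl)
    fix j i assume "j \<in> A" "i \<in> A"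
    then show "b j i * real (card {I\<in>?\<I>. (j, i) \<in> (A - I) \<times> I}) = (if i = j then 0 else ?c * b j i)"
      unfolding incidence[OF \<open>j \<in> A\<close> \<open>i \<in> A\<close>] by simp
  qed
  also have "\<dots> = ?c * (\<Sum>j\<in>A. \<Sum>i\<in>A - {j}. b j i)"
    using A(1) by (simp add: sum_distrib_left sum.If_cases Diff_eq Int_commute)
  finally show ?thesis .
qed

text \<open>The binomial identity that turns the averaged inequality into the factor n / k.\<close>
lemma binomial_weight_identity:
  assumes "1 \<le> k" "k \<le> n"
  shows "real (n choose (k - 1)) + real ((n - 1) choose (k - 1)) / real (n + 1 - k)
       = real k / real n * real ((n + 1) choose k)"
proof -
  have "k * ((n + 1) choose k) = (n + 1) * (n choose (k - 1))"
    using times_binomial_minus1_eq[of k "n + 1"] assms by simp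
  then have e1: "real k * real ((n + 1) choose k) = real (n + 1) * real (n choose (k - 1))"
    by (metis of_nat_mult)
  have e2: "real (n + 1 - k) * real (n choose (k - 1)) = real n * real ((n - 1) choose (k - 1))"
    using binomial_absorb_comp[of n "k - 1"] assms
    by (metis Nat.diff_diff_right add.commute diff_add_inverse le_add_diff_inverse le_trans of_nat_mult)
  have "real (n + 1 - k) > 0" "real n > 0" using assms by auto
  then show ?thesis using e1 e2 by (simp add: field_simps)
qed

lemma average_over_k_subsets:
  fixes a :: "'i \<Rightarrow> real" and b :: "'i \<Rightarrow> 'i \<Rightarrow> real"
  assumes A: "finite A" "card A = n + 1" and k: "1 \<le> k" "k \<le> n"
    and rows: "\<And>j. j \<in> A \<Longrightarrow> (\<Sum>i\<in>A - {j}. b j i) = - a j"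
    and hyp: "\<And>I. I \<subseteq> A \<Longrightarrow> card I = k \<Longrightarrow>
                (\<Sum>i\<in>I. a i) - (\<Sum>j\<in>A - I. \<Sum>i\<in>I. b j i) / real (n + 1 - k) \<le> H"
  shows "(\<Sum>i\<in>A. a i) \<le> real n / real k * H"
proof -
  let ?\<I> = "{I. I \<subseteq> A \<and> card I = k}"
  let ?N = "real ((n + 1) choose k)"
  have "(\<Sum>I\<in>?\<I>. (\<Sum>i\<in>I. a i) - (\<Sum>j\<in>A - I. \<Sum>i\<in>I. b j i) / real (n + 1 - k)) \<le> (\<Sum>I\<in>?\<I>. H)"
    using hyp by (intro sum_mono) auto
  also have "\<dots> = ?N * H" using n_subsets[OF A(1)] A(2) by simp
  finally have "(real (n choose (k - 1)) + real ((n - 1) choose (k - 1)) / real (n + 1 - k))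
                  * (\<Sum>i\<in>A. a i) \<le> ?N * H"
    using rows by (simp add: sum_subtractf sum_divide_distrib[symmetric] sum_negf
        sum_k_subsets_members[OF A k(1)] sum_k_subsets_cross[OF A k(1)] algebra_simps)
  then have "?N * (real k / real n * (\<Sum>i\<in>A. a i)) \<le> ?N * H"
    unfolding binomial_weight_identity[OF k] by (simp add: algebra_simps)
  moreover have "?N > 0" using k by simp
  ultimately have "real k / real n * (\<Sum>i\<in>A. a i) \<le> H" by (metis mult_le_cancel_left_pos)
  then show ?thesis using k by (simp add: field_simps)
qed

lemma centroid_in_convex:
  fixes y :: "'i \<Rightarrow> 'a::real_vector"
  assumes "convex C" "finite A" "A \<noteq> {}" "\<And>i. i \<in> A \<Longrightarrow> y i \<in> C"
  shows "(1 / real (card A)) *\<^sub>R (\<Sum>i\<in>A. y i) \<in> C"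
proof -
  have "(\<Sum>i\<in>A. (1 / real (card A)) *\<^sub>R y i) \<in> C"
    by (rule convex_sum[OF assms(2,1)]) (use assms in auto)
  then show ?thesis by (simp add: scaleR_sum_right)
qed

text \<open>Projecting onto a k-dimensional subspace containing
  the v_i with i in I, the points x_i (i in I) and the centroid of the remaining x_j are
  lifted to points of L, which the l_i dominate.\<close>
lemma projection_support_inequality:
  fixes K L :: "'a::euclidean_space set" and x l v :: "'i \<Rightarrow> 'a"
  assumes K: "convex K" and A: "finite A" and I: "I \<subseteq> A" "card I = k" "k < card A"
    and k: "k \<le> DIM('a)"
    and proj: "\<And>\<xi>. subspace \<xi> \<Longrightarrow> dim \<xi> = k \<Longrightarrow>
                 contains_translate (proj_set \<xi> L) (proj_set \<xi> K)"
    and x: "\<And>i. i \<in> A \<Longrightarrow> x i \<in> K"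
    and support: "\<And>i l'. i \<in> A \<Longrightarrow> l' \<in> L \<Longrightarrow> inner l' (v i) \<le> inner (l i) (v i)"
    and v0: "(\<Sum>i\<in>A. v i) = 0"
  shows "(\<Sum>i\<in>I. inner (x i) (v i)) - (\<Sum>j\<in>A - I. \<Sum>i\<in>I. inner (x j) (v i)) / real (card A - k)
           \<le> (\<Sum>i\<in>A. inner (l i) (v i))"
proof -
  have fI: "finite I" using I(1) A finite_subset by blast
  have "dim (v ` I) \<le> k"
    using dim_le_card[of "v ` I" "v ` I"] card_image_le[OF fI, of v] fI I(2) by (simp add: span_superset)
  then obtain \<xi> where \<xi>: "subspace \<xi>" "dim \<xi> = k" "v ` I \<subseteq> \<xi>"
    using subspace_of_dim_containing k by blast
  obtain t where lift: "\<And>z. z \<in> K \<Longrightarrow> \<exists>l'\<in>L. \<forall>u\<in>\<xi>. inner l' u = inner (z + t) u"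
    using contains_translate_proj_lift[OF \<xi>(1) proj[OF \<xi>(1,2)]] by blast
  define u where "u = (\<Sum>i\<in>I. v i)"
  have u: "u \<in> \<xi>" unfolding u_def using \<xi> by (intro subspace_sum) auto
  have complement: "(\<Sum>j\<in>A - I. v j) = - u"
    using sum.subset_diff[OF I(1) A, of v] v0 unfolding u_def by (simp add: add_eq_0_iff)
  have card_compl: "card (A - I) = card A - k" using I A fI by (simp add: card_Diff_subset)
  define y where "y = (1 / real (card A - k)) *\<^sub>R (\<Sum>j\<in>A - I. x j)"
  have "A - I \<noteq> {}" using card_compl I(3) by (metis card.empty zero_less_diff less_irrefl)
  then have "y \<in> K" unfolding y_def card_compl[symmetric]
    using centroid_in_convex[OF K] A x by blast
  have "inner (x i + t) (v i) \<le> inner (l i) (v i)" if "i \<in> I" for i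
  proof -
    have i: "i \<in> A" using I(1) that by blast
    then obtain l' where l': "l' \<in> L" "\<forall>u\<in>\<xi>. inner l' u = inner (x i + t) u"
      using lift x by blast
    have "v i \<in> \<xi>" using \<xi>(3) that by blast
    then show ?thesis using support[OF i l'(1)] l'(2) by simp
  qed
  then have "(\<Sum>i\<in>I. inner (x i + t) (v i)) \<le> (\<Sum>i\<in>I. inner (l i) (v i))"
    by (rule sum_mono)
  then have part_I: "(\<Sum>i\<in>I. inner (x i) (v i)) + inner t u \<le> (\<Sum>i\<in>I. inner (l i) (v i))"
    unfolding u_def by (simp add: sum.distrib inner_sum_right inner_add_left)
  obtain l' where l': "l' \<in> L" "\<forall>u\<in>\<xi>. inner l' u = inner (y + t) u" using lift \<open>y \<in> K\<close> by blast
  have "- inner (y + t) u = inner l' (\<Sum>j\<in>A - I. v j)" using l'(2) u complement by simp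
  also have "\<dots> \<le> (\<Sum>j\<in>A - I. inner (l j) (v j))"
    unfolding inner_sum_right using support l'(1) by (intro sum_mono) auto
  finally have part_compl: "- inner y u - inner t u \<le> (\<Sum>j\<in>A - I. inner (l j) (v j))"
    by (simp add: inner_add_left)
  have inner_y: "inner y u = (\<Sum>j\<in>A - I. \<Sum>i\<in>I. inner (x j) (v i)) / real (card A - k)"
    unfolding y_def u_def by (simp add: inner_sum_left inner_sum_right sum_divide_distrib sum.swap[of _ I])
  show ?thesis unfolding inner_y[symmetric]
    using part_I part_compl sum.subset_diff[OF I(1) A, of "\<lambda>i. inner (l i) (v i)"] by linarith
qed

lemma support_sum_inequality:
  fixes K L :: "'a::euclidean_space set" and x l v :: "'i \<Rightarrow> 'a"
  assumes K: "convex K" and A: "finite A" "card A = DIM('a) + 1" and k: "1 \<le> k" "k \<le> DIM('a)"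
    and proj: "\<And>\<xi>. subspace \<xi> \<Longrightarrow> dim \<xi> = k \<Longrightarrow>
                 contains_translate (proj_set \<xi> L) (proj_set \<xi> K)"
    and x: "\<And>i. i \<in> A \<Longrightarrow> x i \<in> K"
    and support: "\<And>i l'. i \<in> A \<Longrightarrow> l' \<in> L \<Longrightarrow> inner l' (v i) \<le> inner (l i) (v i)"
    and v0: "(\<Sum>i\<in>A. v i) = 0"
  shows "(\<Sum>i\<in>A. inner (x i) (v i)) \<le> real DIM('a) / real k * (\<Sum>i\<in>A. inner (l i) (v i))"
proof (rule average_over_k_subsets[OF A k])
  fix j assume "j \<in> A"
  then have "(\<Sum>i\<in>A - {j}. v i) = - v j"
    using sum.remove[OF A(1), of j v] v0 by (simp add: add_eq_0_iff)
  then show "(\<Sum>i\<in>A - {j}. inner (x j) (v i)) = - inner (x j) (v j)"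
    by (simp add: inner_sum_right[symmetric])
next
  fix I assume I: "I \<subseteq> A" "card I = k"
  have "k < card A" using A(2) k by simp
  from projection_support_inequality[OF K A(1) I this k(2) proj x support v0]
  show "(\<Sum>i\<in>I. inner (x i) (v i)) - (\<Sum>j\<in>A - I. \<Sum>i\<in>I. inner (x j) (v i)) / real (DIM('a) + 1 - k)
               \<le> (\<Sum>i\<in>A. inner (l i) (v i))"
    using A(2) by simp
qed

lemma sum_sq_dist_centroid:
  fixes p :: "'i \<Rightarrow> 'a::real_inner"
  assumes "finite A" "A \<noteq> {}" and g: "g = (1 / real (card A)) *\<^sub>R (\<Sum>i\<in>A. p i)"
  shows "(\<Sum>i\<in>A. (norm (w - p i))\<^sup>2) = (\<Sum>i\<in>A. (norm (g - p i))\<^sup>2) + real (card A) * (norm (w - g))\<^sup>2"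
proof -
  have "(\<Sum>i\<in>A. g - p i) = real (card A) *\<^sub>R g - (\<Sum>i\<in>A. p i)"
    by (simp add: sum_subtractf sum_constant_scaleR)
  also have "\<dots> = 0" using g assms(1,2) by simp
  finally have balanced: "(\<Sum>i\<in>A. inner (w - g) (g - p i)) = 0"
    by (simp add: inner_sum_right[symmetric])
  have "(norm (w - p i))\<^sup>2 = (norm (w - g))\<^sup>2 + 2 * inner (w - g) (g - p i) + (norm (g - p i))\<^sup>2" for i
  proof -
    have square: "inner (a + b) (a + b) = inner a a + 2 * inner a b + inner b b" for a b :: 'a
      by (simp add: inner_add_left inner_add_right inner_commute)
    have "w - p i = (w - g) + (g - p i)" by simp
    then show ?thesis by (simp only: power2_norm_eq_inner square)
  qed
  then have "(\<Sum>i\<in>A. (norm (w - p i))\<^sup>2) = real (card A) * (norm (w - g))\<^sup>2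
               + 2 * (\<Sum>i\<in>A. inner (w - g) (g - p i)) + (\<Sum>i\<in>A. (norm (g - p i))\<^sup>2)"
    by (simp add: sum.distrib sum_distrib_left)
  then show ?thesis using balanced by simp
qed

text \<open>Finitely many nonempty compact convex sets admit a point w with nearest points p_i whose
  displacements p_i - w sum to zero: take w minimising the sum of squared distances over the
  convex hull of the union; the parallel axis theorem shows that w is the centroid of its
  nearest points.\<close>
lemma balanced_nearest_points:
  fixes C :: "'i \<Rightarrow> 'a::euclidean_space set"
  assumes A: "finite A" "A \<noteq> {}"
    and C: "\<And>i. i \<in> A \<Longrightarrow> compact (C i)" "\<And>i. i \<in> A \<Longrightarrow> convex (C i)"
      "\<And>i. i \<in> A \<Longrightarrow> C i \<noteq> {}"
  obtains w p where "\<And>i. i \<in> A \<Longrightarrow> p i \<in> C i"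
    and "\<And>i y. i \<in> A \<Longrightarrow> y \<in> C i \<Longrightarrow> inner (p i - w) (y - p i) \<ge> 0"
    and "(\<Sum>i\<in>A. p i - w) = 0"
proof -
  have closed: "closed (C i)" if "i \<in> A" for i using C(1)[OF that] compact_imp_closed by blast
  define H where "H = convex hull (\<Union>i\<in>A. C i)"
  define F where "F w = (\<Sum>i\<in>A. (dist w (closest_point (C i) w))\<^sup>2)" for w
  have H: "compact H" unfolding H_def using C(1) A(1) by (intro compact_convex_hull compact_UN) auto
  have H_ne: "H \<noteq> {}" unfolding H_def using C(3) A(2) by (simp add: hull_subset)
  have F_cont: "continuous_on H F" unfolding F_def
  proof (intro continuous_on_sum continuous_on_power continuous_on_dist continuous_on_id)
    fix i assume "i \<in> A"
    then show "continuous_on H (closest_point (C i))"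
      using C(2,3) closed by (intro continuous_on_closest_point)
  qed
  obtain w where wmin: "\<And>y. y \<in> H \<Longrightarrow> F w \<le> F y"
    using continuous_attains_inf[OF H H_ne F_cont] by blast
  define p where "p i = closest_point (C i) w" for i
  have pC: "p i \<in> C i" if "i \<in> A" for i
    unfolding p_def using closest_point_in_set[OF closed[OF that] C(3)[OF that]] .
  define g where "g = (1 / real (card A)) *\<^sub>R (\<Sum>i\<in>A. p i)"
  have "g \<in> H" unfolding g_def H_def
    by (rule centroid_in_convex[OF convex_convex_hull A]) (use pC in \<open>auto intro: hull_inc\<close>)
  then have "F w \<le> F g" by (rule wmin)
  also have "F g \<le> (\<Sum>i\<in>A. (norm (g - p i))\<^sup>2)"
    unfolding F_def
  proof (rule sum_mono)
    fix i assume i: "i \<in> A"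
    have "dist g (closest_point (C i) g) \<le> dist g (p i)"
      by (rule closest_point_le[OF closed[OF i] pC[OF i]])
    then show "(dist g (closest_point (C i) g))\<^sup>2 \<le> (norm (g - p i))\<^sup>2"
      by (metis dist_norm power_mono zero_le_dist)
  qed
  finally have "real (card A) * (norm (w - g))\<^sup>2 \<le> 0"
    using sum_sq_dist_centroid[OF A g_def, of w] unfolding F_def p_def dist_norm by linarith
  moreover have "card A > 0" using A by auto
  ultimately have "w = g" by (simp add: mult_le_0_iff)
  then have "(\<Sum>i\<in>A. p i - w) = 0" unfolding g_def using A by (simp add: sum_subtractf sum_constant_scaleR)
  moreover have "inner (p i - w) (y - p i) \<ge> 0" if i: "i \<in> A" and y: "y \<in> C i" for i y
  proof -
    have "inner (w - p i) (y - p i) \<le> 0"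
      using any_closest_point_dot[OF C(2)[OF i] closed[OF i] pC[OF i] y]
        closest_point_le[OF closed[OF i]] unfolding p_def by blast
    then show ?thesis by (simp add: inner_diff_left)
  qed
  ultimately show ?thesis using that pC by blast
qed

definition reflected_copy :: "real \<Rightarrow> 'a::real_vector set \<Rightarrow> 'a \<Rightarrow> 'a set" where
  "reflected_copy c L x = (\<lambda>l. x + (- c) *\<^sub>R l) ` L"

lemma reflected_copy_compact: "compact L \<Longrightarrow> compact (reflected_copy c L x)"
  for L :: "'a::euclidean_space set"
  unfolding reflected_copy_def by (rule compact_affinity)

lemma reflected_copy_convex: "convex L \<Longrightarrow> convex (reflected_copy c L x)"
  for L :: "'a::euclidean_space set"
  unfolding reflected_copy_def by (rule convex_affinity)

lemma mem_reflected_copy_iff: "w \<in> reflected_copy c L x \<longleftrightarrow> x \<in> (\<lambda>l. c *\<^sub>R l + w) ` L"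
  unfolding reflected_copy_def by (auto simp: algebra_simps)

text \<open>Main geometric step: any n + 1 reflected copies of ratio n / k have a common point.  For
  balanced nearest points the support inequality yields sum |v_i|^2 <= 0.\<close>
lemma reflected_copies_meet:
  fixes K L :: "'a::euclidean_space set" and x :: "'i \<Rightarrow> 'a"
  assumes K: "convex K" and L: "compact L" "convex L" "L \<noteq> {}"
    and k: "1 \<le> k" "k \<le> DIM('a)"
    and proj: "\<And>\<xi>. subspace \<xi> \<Longrightarrow> dim \<xi> = k \<Longrightarrow>
                 contains_translate (proj_set \<xi> L) (proj_set \<xi> K)"
    and A: "finite A" "card A = DIM('a) + 1" and x: "\<And>i. i \<in> A \<Longrightarrow> x i \<in> K"
  shows "\<exists>w. \<forall>i\<in>A. w \<in> reflected_copy (real DIM('a) / real k) L (x i)"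
proof -
  define c where "c = real DIM('a) / real k"
  have c: "c > 0" unfolding c_def using k by simp
  have "A \<noteq> {}" using A by auto
  have copies: "compact (reflected_copy c L (x i))" "convex (reflected_copy c L (x i))"
    "reflected_copy c L (x i) \<noteq> {}" for i
    using reflected_copy_compact[OF L(1)] reflected_copy_convex[OF L(2)] L(3)
    by (auto simp: reflected_copy_def)
  obtain w p where pC: "\<And>i. i \<in> A \<Longrightarrow> p i \<in> reflected_copy c L (x i)"
    and nearest: "\<And>i y. i \<in> A \<Longrightarrow> y \<in> reflected_copy c L (x i) \<Longrightarrow> inner (p i - w) (y - p i) \<ge> 0"
    and balanced: "(\<Sum>i\<in>A. p i - w) = 0"
    by (rule balanced_nearest_points[OF A(1) \<open>A \<noteq> {}\<close>, of "\<lambda>i. reflected_copy c L (x i)"])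
      (use copies in auto)
  define v where "v i = p i - w" for i
  have v0: "(\<Sum>i\<in>A. v i) = 0" using balanced unfolding v_def .
  have "\<forall>i\<in>A. \<exists>l'\<in>L. p i = x i + (- c) *\<^sub>R l'" using pC unfolding reflected_copy_def by blast
  then obtain l where l: "\<And>i. i \<in> A \<Longrightarrow> l i \<in> L" "\<And>i. i \<in> A \<Longrightarrow> p i = x i + (- c) *\<^sub>R l i"
    by metis
  have support: "inner l' (v i) \<le> inner (l i) (v i)" if i: "i \<in> A" and l': "l' \<in> L" for i l'
  proof -
    have "x i + (- c) *\<^sub>R l' \<in> reflected_copy c L (x i)" unfolding reflected_copy_def using l' by blast
    then have "0 \<le> inner (v i) (x i + (- c) *\<^sub>R l' - p i)" using nearest[OF i] unfolding v_def by blast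
    also have "x i + (- c) *\<^sub>R l' - p i = c *\<^sub>R (l i - l')" using l(2)[OF i] by (simp add: algebra_simps)
    finally have "0 \<le> c * (inner (v i) (l i) - inner (v i) l')" by (simp add: inner_diff_right)
    then show ?thesis using c by (simp add: zero_le_mult_iff inner_commute)
  qed
  have "(\<Sum>i\<in>A. inner (x i) (v i)) \<le> c * (\<Sum>i\<in>A. inner (l i) (v i))"
    unfolding c_def by (rule support_sum_inequality[OF K A k proj x support v0])
  moreover have "(\<Sum>i\<in>A. inner (p i) (v i))
                   = (\<Sum>i\<in>A. inner (x i) (v i)) - c * (\<Sum>i\<in>A. inner (l i) (v i))"
  proof -
    have "(\<Sum>i\<in>A. inner (p i) (v i)) = (\<Sum>i\<in>A. inner (x i) (v i) - c * inner (l i) (v i))"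
      using l(2) by (intro sum.cong refl) (simp add: inner_diff_left)
    then show ?thesis by (simp add: sum_subtractf sum_distrib_left)
  qed
  moreover have "(\<Sum>i\<in>A. inner (p i) (v i)) = (\<Sum>i\<in>A. inner (v i) (v i)) + inner w (\<Sum>i\<in>A. v i)"
  proof -
    have "inner (p i) (v i) = inner (v i) (v i) + inner w (v i)" for i
      using inner_add_left[of "v i" w "v i"] by (simp add: v_def)
    then show ?thesis by (simp add: sum.distrib inner_sum_right)
  qed
  ultimately have "(\<Sum>i\<in>A. inner (v i) (v i)) \<le> 0" using v0 by simp
  then have "(\<Sum>i\<in>A. inner (v i) (v i)) = 0" by (meson antisym inner_ge_zero sum_nonneg)
  then have "\<forall>i\<in>A. v i = 0" using sum_nonneg_eq_0_iff[OF A(1), of "\<lambda>i. inner (v i) (v i)"] by simp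
  then have "\<forall>i\<in>A. w \<in> reflected_copy c L (x i)" using pC unfolding v_def by simp
  then show ?thesis unfolding c_def by blast
qed

lemma finite_set_as_interval_image:
  assumes "finite S" "S \<noteq> {}" "card S \<le> n + 1"
  obtains e :: "nat \<Rightarrow> 'b" where "S = e ` {0..n}"
proof -
  obtain h where h: "bij_betw h {0..<card S} S" using ex_bij_betw_nat_finite[OF assms(1)] by blast
  have pos: "card S > 0" using assms by auto
  define e where "e i = h (min i (card S - 1))" for i
  have "e ` {0..n} = h ` {0..<card S}"
  proof (intro equalityI subsetI)
    fix y assume "y \<in> e ` {0..n}"
    then show "y \<in> h ` {0..<card S}" unfolding e_def using pos by auto
  next
    fix y assume "y \<in> h ` {0..<card S}"
    then obtain j where "j < card S" "y = h j" by auto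
    then have "j \<in> {0..n}" "y = e j" using assms(3) unfolding e_def by auto
    then show "y \<in> e ` {0..n}" by blast
  qed
  then show ?thesis using that h unfolding bij_betw_def by metis
qed

lemma few_reflected_copies_meet:
  fixes K L :: "'a::euclidean_space set"
  assumes K: "convex K" and L: "compact L" "convex L" "L \<noteq> {}"
    and k: "1 \<le> k" "k \<le> DIM('a)"
    and proj: "\<And>\<xi>. subspace \<xi> \<Longrightarrow> dim \<xi> = k \<Longrightarrow>
                 contains_translate (proj_set \<xi> L) (proj_set \<xi> K)"
    and t: "t \<subseteq> reflected_copy (real DIM('a) / real k) L ` K" "finite t" "t \<noteq> {}"
      "card t \<le> DIM('a) + 1"
  shows "\<Inter>t \<noteq> {}"
proof -
  let ?D = "reflected_copy (real DIM('a) / real k) L"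
  obtain e where e: "t = e ` {0..DIM('a)}" using finite_set_as_interval_image t(2-4) by metis
  have "\<forall>i\<in>{0..DIM('a)}. \<exists>z\<in>K. e i = ?D z" using t(1) e by blast
  then obtain x where x: "\<And>i. i \<in> {0..DIM('a)} \<Longrightarrow> x i \<in> K \<and> e i = ?D (x i)" by metis
  obtain w where "\<forall>i\<in>{0..DIM('a)}. w \<in> ?D (x i)"
    using reflected_copies_meet[OF K L k proj, of "{0..DIM('a)}" x] x by auto
  then have "w \<in> \<Inter>t" using e x by auto
  then show ?thesis by blast
qed

lemma Helly_compact:
  fixes \<F> :: "'a::euclidean_space set set"
  assumes "\<F> \<noteq> {}" and compact: "\<And>S. S \<in> \<F> \<Longrightarrow> compact S" and convex: "\<And>S. S \<in> \<F> \<Longrightarrow> convex S"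
    and small: "\<And>t. t \<subseteq> \<F> \<Longrightarrow> finite t \<Longrightarrow> t \<noteq> {} \<Longrightarrow> card t \<le> DIM('a) + 1 \<Longrightarrow> \<Inter>t \<noteq> {}"
  shows "\<Inter>\<F> \<noteq> {}"
proof -
  obtain S0 where S0: "S0 \<in> \<F>" using assms(1) by blast
  have "S0 \<inter> \<Inter>\<F> \<noteq> {}"
  proof (rule compact_imp_fip[OF compact[OF S0]])
    show "closed T" if "T \<in> \<F>" for T using compact[OF that] compact_imp_closed by blast
  next
    fix \<G> assume \<G>: "finite \<G>" "\<G> \<subseteq> \<F>"
    let ?t = "insert S0 \<G>"
    have t: "?t \<subseteq> \<F>" "finite ?t" "?t \<noteq> {}" using S0 \<G> by auto
    have "\<Inter>?t \<noteq> {}"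
    proof (cases "card ?t \<le> DIM('a) + 1")
      case True then show ?thesis using small t by blast
    next
      case False
      show ?thesis
      proof (rule Helly)
        show "DIM('a) + 1 \<le> card ?t" using False by simp
        show "\<forall>S\<in>?t. convex S" using convex t(1) by blast
        fix s assume s: "s \<subseteq> ?t" "card s = DIM('a) + 1"
        have "s \<subseteq> \<F>" using s(1) t(1) by (rule subset_trans)
        moreover have "finite s" using s(1) t(2) by (rule finite_subset)
        moreover have "s \<noteq> {}" using s(2) by auto
        ultimately show "\<Inter>s \<noteq> {}" using s(2) by (intro small) auto
      qed
    qed
    then show "S0 \<inter> \<Inter>\<G> \<noteq> {}" by simp
  qed
  then show ?thesis by blast
qed

lemma measure_le_homothetic_cover:
  fixes K L :: "'a::euclidean_space set"
  assumes "compact K" "compact L" "K \<subseteq> (\<lambda>l. c *\<^sub>R l + w) ` L"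
  shows "measure lebesgue K \<le> \<bar>c\<bar> ^ DIM('a) * measure lebesgue L"
proof -
  have "compact ((\<lambda>l. c *\<^sub>R l + w) ` L)"
    using compact_affinity[OF assms(2), of w c] by (simp add: add.commute)
  then have "measure lebesgue K \<le> measure lebesgue ((\<lambda>l. c *\<^sub>R l + w) ` L)"
    using assms(1,3) by (intro measure_mono_fmeasurable) (auto intro: lmeasurable_compact fmeasurableD)
  also have "\<dots> = \<bar>c\<bar> ^ DIM('a) * measure lebesgue L" by (rule measure_lebesgue_affine)
  finally show ?thesis .
qed

theorem corollary6p2:
  fixes K L :: "'a::euclidean_space set" and d :: nat
  assumes n2: "DIM('a) \<ge> 2"
    and K: "compact K" "convex K"
    and L: "compact L" "convex L"
    and d: "1 \<le> d" "d \<le> DIM('a) - 1"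
    and proj: "\<And>\<xi>. subspace \<xi> \<Longrightarrow> dim \<xi> = DIM('a) - d \<Longrightarrow>
                 contains_translate (proj_set \<xi> L) (proj_set \<xi> K)"
  shows "measure lebesgue K \<le>
           (real DIM('a) / real (DIM('a) - d)) ^ DIM('a) * measure lebesgue L"
proof (cases "K = {}")
  case False
  define k where "k = DIM('a) - d"
  define c where "c = real DIM('a) / real k"
  have k: "1 \<le> k" "k \<le> DIM('a)" unfolding k_def using d n2 by auto
  have proj_k: "\<And>\<xi>. subspace \<xi> \<Longrightarrow> dim \<xi> = k \<Longrightarrow> contains_translate (proj_set \<xi> L) (proj_set \<xi> K)"
    using proj unfolding k_def .
  have "L \<noteq> {}" using projection_hypothesis_nonempty[OF False k(2) proj_k] .
  have "\<Inter>(reflected_copy c L ` K) \<noteq> {}"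
  proof (rule Helly_compact)
    show "reflected_copy c L ` K \<noteq> {}" using False by blast
  qed (use reflected_copy_compact[OF L(1)] reflected_copy_convex[OF L(2)]
         few_reflected_copies_meet[OF K(2) L \<open>L \<noteq> {}\<close> k proj_k] in \<open>auto simp: c_def\<close>)
  then obtain w where "\<forall>x\<in>K. w \<in> reflected_copy c L x" by blast
  then have "K \<subseteq> (\<lambda>l. c *\<^sub>R l + w) ` L" by (auto simp: mem_reflected_copy_iff)
  from measure_le_homothetic_cover[OF K(1) L(1) this]
  show ?thesis using k unfolding c_def k_def by simp
qed simp

end
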